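(* Let $\mathbf v=(v_1,\dots,v_m)$ and $\mathbf k=(k_1,\dots,k_m)$ be $m$-tuples of positive integers with $2\le k_i\le v_i$ for all $i$. Define $i\sim j$ on $\{1,\dots,m\}$ if and only if $v_i=v_j$ and $k_i=k_j$, and let $R$ be a set of equivalence class representatives. Then $C(\mathbf v,\mathbf k,2)=C(\mathbf v^R,\mathbf k^R,2)$.
   Context: For $R\subseteq\{1,\dots,m\}$, $\mathbf v^R$ denotes the tuple of entries of $\mathbf v$ in positions from $R$ (in increasing order). For tuples $\mathbf v,\mathbf k$ of positive integers of the same length $p$ with $\mathbf k\le\mathbf v$ entrywise: let $X_1,\dots,X_p$ be pairwise disjoint sets with $|X_i|=v_i$; a block is a $p$-tuple $(B_1,\dots,B_p)$ with $B_i\subseteq X_i$, $|B_i|=k_i$; a $p$-tuple of sets $(T_1,\dots,T_p)$ is $(\mathbf v,\mathbf k,2)$-admissible if $T_i\subseteq X_i$, $|T_i|\le k_i$ and $\sum|T_i|=2$, and is contained in a block if $T_i\subseteq B_i$ for all $i$. A ${\rm GC}(\mathbf v,\mathbf k,2)$ is a finite family (repetitions allowed) of blocks containing every admissible tuple in at least one block; $C(\mathbf v,\mathbf k,2)$ is the minimum number of blocks. *)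

theory Defs
  imports Main
begin

text \<open>Tuples are lists (0-indexed). The ground set X_i is taken as {..< v!i}
  (the sets X_i are disjoint as they are indexed by position i).\<close>

definition is_block :: "nat list \<Rightarrow> nat list \<Rightarrow> nat set list \<Rightarrow> bool" where
  "is_block v k B \<longleftrightarrow> length B = length v \<and>
     (\<forall>i < length v. B!i \<subseteq> {..< v!i} \<and> card (B!i) = k!i)"

definition admissible2 :: "nat list \<Rightarrow> nat list \<Rightarrow> nat set list \<Rightarrow> bool" where
  "admissible2 v k T \<longleftrightarrow> length T = length v \<and>
     (\<forall>i < length v. T!i \<subseteq> {..< v!i} \<and> card (T!i) \<le> k!i) \<and>
     (\<Sum>i < length v. card (T!i)) = 2"

definition contained_in :: "nat set list \<Rightarrow> nat set list \<Rightarrow> bool" where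
  "contained_in T B \<longleftrightarrow> (\<forall>i < length T. T!i \<subseteq> B!i)"

definition is_GC2 :: "nat list \<Rightarrow> nat list \<Rightarrow> nat set list list \<Rightarrow> bool" where
  "is_GC2 v k F \<longleftrightarrow> (\<forall>B \<in> set F. is_block v k B) \<and>
     (\<forall>T. admissible2 v k T \<longrightarrow> (\<exists>B \<in> set F. contained_in T B))"

definition C2 :: "nat list \<Rightarrow> nat list \<Rightarrow> nat" where
  "C2 v k = (LEAST n. \<exists>F. is_GC2 v k F \<and> length F = n)"

end

theory Submission
  imports Defs
begin

text \<open>Restricting a covering to the representatives gives a covering of the reduced tuple, so
  \<open>C(v\<^sup>R,k\<^sup>R,2) \<le> C(v,k,2)\<close>. Conversely, a covering of the reduced tuple is copied onto every
  position of the same class. An admissible tuple of \<open>(v,k)\<close> then maps onto a tuple of total size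
  at most 2 in which two points may fall into the same class; since all \<open>k\<^sub>i \<ge> 2\<close> this is still
  admissible after padding to size exactly 2, so it is covered.\<close>

definition reindex_list :: "(nat \<Rightarrow> nat) \<Rightarrow> nat \<Rightarrow> 'a list \<Rightarrow> 'a list" where
  "reindex_list f n xs = map (\<lambda>i. xs ! f i) [0..<n]"

lemma length_reindex_list [simp]: "length (reindex_list f n xs) = n"
  by (simp add: reindex_list_def)

lemma nth_reindex_list [simp]: "i < n \<Longrightarrow> reindex_list f n xs ! i = xs ! f i"
  by (simp add: reindex_list_def)

lemma C2_le:
  assumes "is_GC2 v k F"
  shows "C2 v k \<le> length F"
  unfolding C2_def by (rule Least_le) (use assms in blast)

lemma C2_attained:
  assumes "\<exists>F. is_GC2 v k F"
  shows "\<exists>F. is_GC2 v k F \<and> length F = C2 v k"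
  unfolding C2_def by (rule LeastI_ex) (use assms in blast)

lemma C2_le_if_GC2_map:
  assumes "\<exists>F. is_GC2 v k F"
    and "\<And>F. is_GC2 v k F \<Longrightarrow> is_GC2 v' k' (map g F)"
  shows "C2 v' k' \<le> C2 v k"
  using C2_attained[OF assms(1)] C2_le assms(2) by fastforce

lemma admissible2_extends_to_block:
  assumes "admissible2 v k T" and "\<forall>i < length v. k!i \<le> v!i"
  shows "\<exists>B. is_block v k B \<and> contained_in T B"
proof -
  have "\<exists>S. T!i \<subseteq> S \<and> S \<subseteq> {..< v!i} \<and> card S = k!i" if "i < length v" for i
    by (rule exists_subset_between) (use assms that in \<open>auto simp: admissible2_def\<close>)
  then obtain S where S: "\<forall>i < length v. T!i \<subseteq> S i \<and> S i \<subseteq> {..< v!i} \<and> card (S i) = k!i"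
    by metis
  have "is_block v k (map S [0..<length v])" using S by (simp add: is_block_def)
  moreover have "contained_in T (map S [0..<length v])"
    using S assms(1) by (simp add: contained_in_def admissible2_def)
  ultimately show ?thesis by blast
qed

lemma finite_admissible2: "finite {T. admissible2 v k T}"
proof (rule finite_subset[OF _ finite_lists_length_eq])
  show "{T. admissible2 v k T} \<subseteq> {T. set T \<subseteq> Pow {..< sum_list v} \<and> length T = length v}"
    using elem_le_sum_list by (fastforce simp: admissible2_def in_set_conv_nth)
qed simp

lemma GC2_exists:
  assumes "\<forall>i < length v. k!i \<le> v!i"
  shows "\<exists>F. is_GC2 v k F"
proof -
  obtain Ts where Ts: "set Ts = {T. admissible2 v k T}"
    using finite_list[OF finite_admissible2] by blast
  define F where "F = map (\<lambda>T. SOME B. is_block v k B \<and> contained_in T B) Ts"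
  have "is_block v k B \<and> contained_in T B"
    if "admissible2 v k T" "B = (SOME B. is_block v k B \<and> contained_in T B)" for T B
    using someI_ex[OF admissible2_extends_to_block[OF that(1) assms]] that(2) by blast
  then have "is_GC2 v k F" using Ts by (fastforce simp: is_GC2_def F_def)
  then show ?thesis ..
qed

lemma is_block_reindex_list:
  assumes "is_block v k B" and "\<forall>i < n. f i < length v"
  shows "is_block (reindex_list f n v) (reindex_list f n k) (reindex_list f n B)"
  using assms by (simp add: is_block_def)

lemma admissible2_spread:
  assumes T': "admissible2 (reindex_list f p v) (reindex_list f p k) T'"
    and f: "inj_on f {..<p}" "\<forall>j<p. f j < length v"
  shows "\<exists>T. admissible2 v k T \<and> (\<forall>j<p. T ! f j = T' ! j)"
proof -
  define T where
    "T = map (\<lambda>i. if i \<in> f ` {..<p} then T' ! inv_into {..<p} f i else {}) [0..<length v]"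
  have Tf: "T ! f j = T' ! j" if "j < p" for j
    using that f by (simp add: T_def)
  have "admissible2 v k T"
    unfolding admissible2_def
  proof (intro conjI allI impI)
    show "length T = length v" by (simp add: T_def)
  next
    fix i assume "i < length v"
    have "T!i \<subseteq> {..< v!i} \<and> card (T!i) \<le> k!i"
    proof (cases "i \<in> f ` {..<p}")
      case True
      then obtain j where "j < p" "i = f j" by auto
      then show ?thesis using Tf T' by (auto simp: admissible2_def)
    qed (use \<open>i < length v\<close> in \<open>simp add: T_def\<close>)
    then show "T!i \<subseteq> {..< v!i}" "card (T!i) \<le> k!i" by auto
  next
    have "(\<Sum>i<length v. card (T!i)) = (\<Sum>i\<in>f ` {..<p}. card (T!i))"
      by (rule sum.mono_neutral_right) (use f in \<open>auto simp: T_def\<close>)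
    also have "\<dots> = (\<Sum>j<p. card (T'!j))"
      by (rule sum.reindex_cong[OF f(1)]) (auto simp: Tf)
    also have "\<dots> = 2" using T' by (simp add: admissible2_def)
    finally show "(\<Sum>i<length v. card (T!i)) = 2" .
  qed
  with Tf show ?thesis by blast
qed

lemma is_GC2_reindex_list_inj:
  assumes F: "is_GC2 v k F" and f: "inj_on f {..<p}" "\<forall>j<p. f j < length v"
  shows "is_GC2 (reindex_list f p v) (reindex_list f p k) (map (reindex_list f p) F)"
  unfolding is_GC2_def
proof (intro conjI allI impI ballI)
  fix B' assume "B' \<in> set (map (reindex_list f p) F)"
  then show "is_block (reindex_list f p v) (reindex_list f p k) B'"
    using F f(2) is_block_reindex_list by (auto simp: is_GC2_def)
next
  fix T' assume T': "admissible2 (reindex_list f p v) (reindex_list f p k) T'"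
  obtain T where T: "admissible2 v k T" "\<forall>j<p. T ! f j = T' ! j"
    using admissible2_spread[OF T' f] by blast
  then obtain B where B: "B \<in> set F" "contained_in T B" using F by (auto simp: is_GC2_def)
  have "T' ! j \<subseteq> reindex_list f p B ! j" if "j < p" for j
  proof -
    have "f j < length T" using T(1) f(2) that by (simp add: admissible2_def)
    then show ?thesis using B(2) T(2) that by (auto simp: contained_in_def)
  qed
  moreover have "length T' = p" using T' by (simp add: admissible2_def)
  ultimately show "\<exists>B'\<in>set (map (reindex_list f p) F). contained_in T' B'"
    using B(1) by (auto simp: contained_in_def)
qed

lemma admissible2_pad:
  assumes lT: "length T = length v" and v: "0 < length v"
    and T: "\<forall>j < length v. T!j \<subseteq> {..< v!j}"
    and kv: "\<forall>j < length v. 2 \<le> k!j \<and> k!j \<le> v!j"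
    and s: "(\<Sum>j<length v. card (T!j)) \<le> 2"
  shows "\<exists>T'. admissible2 v k T' \<and> (\<forall>j < length v. T!j \<subseteq> T'!j)"
proof -
  let ?s = "\<Sum>j<length v. card (T!j)"
  have card_le_s: "card (T!j) \<le> ?s" if "j < length v" for j
    by (rule member_le_sum[where f="\<lambda>j. card (T!j)"]) (use that in auto)
  define d where "d = 2 - ?s"
  have "\<exists>S. T!0 \<subseteq> S \<and> S \<subseteq> {..< v!0} \<and> card S = card (T!0) + d"
    by (rule exists_subset_between) (use T kv v card_le_s[of 0] s in \<open>auto simp: d_def\<close>)
  then obtain S where S: "T!0 \<subseteq> S" "S \<subseteq> {..< v!0}" "card S = card (T!0) + d" by blast
  define T' where "T' = T[0 := S]"
  have card_T': "card (T'!j) = card (T!j) + (if j = 0 then d else 0)" if "j < length v" for j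
    using that S lT by (auto simp: T'_def)
  have "admissible2 v k T'"
    unfolding admissible2_def
  proof (intro conjI allI impI)
    show "length T' = length v" using lT by (simp add: T'_def)
  next
    fix j assume j: "j < length v"
    show "T'!j \<subseteq> {..< v!j}" using j S T lT by (cases "j = 0") (auto simp: T'_def)
    show "card (T'!j) \<le> k!j" using card_T'[OF j] card_le_s[OF j] kv j s by (auto simp: d_def)
  next
    have "(\<Sum>j<length v. card (T'!j)) = ?s + d"
      using v by (simp add: card_T' sum.distrib)
    then show "(\<Sum>j<length v. card (T'!j)) = 2" using s by (simp add: d_def)
  qed
  moreover have "T!j \<subseteq> T'!j" if "j < length v" for j
    using that S(1) lT by (cases "j = 0") (auto simp: T'_def)
  ultimately show ?thesis by blast
qed

lemma admissible2_merge:
  assumes T: "admissible2 (reindex_list \<sigma> n v) (reindex_list \<sigma> n k) T"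
    and \<sigma>: "\<forall>i<n. \<sigma> i < length v"
    and kv: "\<forall>j < length v. 2 \<le> k!j \<and> k!j \<le> v!j"
  shows "\<exists>T'. admissible2 v k T' \<and> (\<forall>i<n. T!i \<subseteq> T' ! \<sigma> i)"
proof -
  define T0 where "T0 = map (\<lambda>j. \<Union>i\<in>{i. i < n \<and> \<sigma> i = j}. T!i) [0..<length v]"
  have "0 < n" using T by (auto simp: admissible2_def)
  then have v: "0 < length v" using \<sigma> by auto
  have T0_sub: "\<forall>j < length v. T0!j \<subseteq> {..< v!j}"
    using T by (fastforce simp: T0_def admissible2_def)
  have "(\<Sum>j<length v. card (T0!j)) \<le> (\<Sum>j<length v. \<Sum>i\<in>{i. i \<in> {..<n} \<and> \<sigma> i = j}. card (T!i))"
    by (auto simp: T0_def intro!: sum_mono card_UN_le)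
  also have "\<dots> = (\<Sum>i<n. card (T!i))"
    by (rule sum.group) (use \<sigma> in auto)
  also have "\<dots> = 2" using T by (simp add: admissible2_def)
  finally obtain T' where T': "admissible2 v k T'" "\<forall>j < length v. T0!j \<subseteq> T'!j"
    using admissible2_pad[OF _ v T0_sub kv] by (auto simp: T0_def)
  have "T!i \<subseteq> T' ! \<sigma> i" if "i < n" for i
  proof -
    have "T!i \<subseteq> T0 ! \<sigma> i" using that \<sigma> by (auto simp: T0_def)
    then show ?thesis using T'(2) that \<sigma> by blast
  qed
  with T' show ?thesis by blast
qed

lemma is_GC2_reindex_list:
  assumes F: "is_GC2 v k F"
    and \<sigma>: "\<forall>i<n. \<sigma> i < length v"
    and kv: "\<forall>j < length v. 2 \<le> k!j \<and> k!j \<le> v!j"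
  shows "is_GC2 (reindex_list \<sigma> n v) (reindex_list \<sigma> n k) (map (reindex_list \<sigma> n) F)"
  unfolding is_GC2_def
proof (intro conjI allI impI ballI)
  fix B assume "B \<in> set (map (reindex_list \<sigma> n) F)"
  then show "is_block (reindex_list \<sigma> n v) (reindex_list \<sigma> n k) B"
    using F \<sigma> is_block_reindex_list by (auto simp: is_GC2_def)
next
  fix T assume T: "admissible2 (reindex_list \<sigma> n v) (reindex_list \<sigma> n k) T"
  obtain T' where T': "admissible2 v k T'" "\<forall>i<n. T!i \<subseteq> T' ! \<sigma> i"
    using admissible2_merge[OF T \<sigma> kv] by blast
  then obtain B where B: "B \<in> set F" "contained_in T' B" using F by (auto simp: is_GC2_def)
  have "T!i \<subseteq> reindex_list \<sigma> n B ! i" if "i < n" for i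
  proof -
    have "\<sigma> i < length T'" using T'(1) \<sigma> that by (simp add: admissible2_def)
    then show ?thesis using T'(2) B(2) that by (auto simp: contained_in_def)
  qed
  moreover have "length T = n" using T by (simp add: admissible2_def)
  ultimately have "contained_in T (reindex_list \<sigma> n B)" by (simp add: contained_in_def)
  with B(1) show "\<exists>B\<in>set (map (reindex_list \<sigma> n) F). contained_in T B" by auto
qed

lemma nths_eq_reindex_list:
  assumes "length k = length v" and "R \<subseteq> {..< length v}"
  obtains f p where "inj_on f {..<p}" and "f ` {..<p} = R" and "\<forall>j<p. f j < length v"
    and "nths v R = reindex_list f p v" and "nths k R = reindex_list f p k"
proof -
  define rs where "rs = nths [0..<length v] R"
  have rs: "nths v R = map (nth v) rs" "nths k R = map (nth k) rs"
    using assms(1) by (metis rs_def map_nth nths_map)+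
  have "inj_on (nth rs) {..<length rs}"
    by (simp add: rs_def inj_on_def nth_eq_iff_index_eq)
  moreover have "set rs = R" using assms(2) by (force simp: rs_def set_nths)
  then have "nth rs ` {..<length rs} = R" "\<forall>j < length rs. rs!j < length v"
    using assms(2) nth_image[of "length rs" rs] by (auto simp: lessThan_atLeast0 dest!: nth_mem)
  ultimately show thesis using assms(1) by (intro that) (auto simp: rs intro: nth_equalityI)
qed

lemma reindex_list_onto_representatives:
  assumes f: "f ` {..<p} = R" and "length k = length v"
    and "\<forall>i < length v. \<exists>j \<in> R. v!j = v!i \<and> k!j = k!i"
  obtains \<sigma> where "\<forall>i < length v. \<sigma> i < p"
    and "v = reindex_list \<sigma> (length v) (reindex_list f p v)"
    and "k = reindex_list \<sigma> (length v) (reindex_list f p k)"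
proof -
  have "\<exists>j<p. v ! f j = v!i \<and> k ! f j = k!i" if i: "i < length v" for i
  proof -
    obtain r where "r \<in> R" "v!r = v!i" "k!r = k!i" using assms(3) i by blast
    with f show ?thesis by auto
  qed
  then obtain \<sigma> where \<sigma>: "\<forall>i < length v. \<sigma> i < p \<and> v ! f (\<sigma> i) = v!i \<and> k ! f (\<sigma> i) = k!i"
    by metis
  show thesis
  proof
    show "v = reindex_list \<sigma> (length v) (reindex_list f p v)"
      using \<sigma> by (intro nth_equalityI) simp_all
    show "k = reindex_list \<sigma> (length v) (reindex_list f p k)"
      using \<sigma> assms(2) by (intro nth_equalityI) simp_all
  qed (use \<sigma> in simp)
qed

theorem corollary3p14:
  fixes v k :: "nat list" and R :: "nat set"
  assumes "length k = length v"
    and "\<forall>i < length v. 2 \<le> k!i \<and> k!i \<le> v!i"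
    and "R \<subseteq> {..< length v}"
    and "\<forall>i < length v. \<exists>!j. j \<in> R \<and> v!j = v!i \<and> k!j = k!i"
  shows "C2 v k = C2 (nths v R) (nths k R)"
proof -
  obtain f p where f: "inj_on f {..<p}" "f ` {..<p} = R" "\<forall>j<p. f j < length v"
    and reduced: "nths v R = reindex_list f p v" "nths k R = reindex_list f p k"
    by (rule nths_eq_reindex_list[OF assms(1,3)])
  let ?v' = "reindex_list f p v" and ?k' = "reindex_list f p k"
  have kv': "\<forall>j<p. 2 \<le> ?k'!j \<and> ?k'!j \<le> ?v'!j" using assms(2) f(3) by simp
  have "C2 ?v' ?k' \<le> C2 v k"
    by (rule C2_le_if_GC2_map[OF GC2_exists is_GC2_reindex_list_inj[OF _ f(1,3)]])
      (use assms(2) in auto)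
  moreover obtain \<sigma> where \<sigma>: "\<forall>i < length v. \<sigma> i < p"
    and expanded: "v = reindex_list \<sigma> (length v) ?v'" "k = reindex_list \<sigma> (length v) ?k'"
    using reindex_list_onto_representatives[OF f(2) assms(1)] assms(4) by blast
  have "C2 (reindex_list \<sigma> (length v) ?v') (reindex_list \<sigma> (length v) ?k') \<le> C2 ?v' ?k'"
    by (rule C2_le_if_GC2_map[OF GC2_exists is_GC2_reindex_list]) (use \<sigma> kv' in auto)
  then have "C2 v k \<le> C2 ?v' ?k'"
    by (simp only: expanded[symmetric])
  ultimately show ?thesis unfolding reduced by simp
qed

end
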